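(* Let $K\ge 3$, $p\in(0,1)$ and let $f\in\mathcal M_p$ with $\sigma_f$ equal to the identity. There exists $q_0\in(0,1)$, depending on $f$ (and $K,p$) but not on $M$, such that for every positive integer $M$ and every $r\in\{2,\dots,K-1\}$, running \textsc{NE} with parameter $M$ gives $$\mathbb P(\mathcal E_{r-1}\setminus\mathcal E_r)\le (K-r+1)\,q_0^M.$$
   Context: Items are $[K]=\{1,\dots,K\}$, and $\mathcal S=\{S\subseteq[K]:|S|\ge 2\}$. A preference $f$ is a family of numbers $f(i\mid S)$, $S\in\mathcal S$, $i\in[K]$. For $p\in(0,1)$, the $p$-Separable family $\mathcal M_p$ consists of all $f$ such that (i) $f(i\mid S)>0$ iff $i\in S$; (ii) $\sum_{i\in S}f(i\mid S)=1$ for all $S\in\mathcal S$; (iii) there is a bijection $\sigma_f:[K]\to[K]$ (the ranking) such that for all $S\in\mathcal S$ and $i,i'\in S$ with $\sigma_f(i')<\sigma_f(i)$, $f(i\mid S)\le p\, f(i'\mid S)$. Interaction model: at each time $t$ a display set $S_t\in\mathcal S$ is chosen based on the past, and a choice $X_t\in S_t$ is observed with conditional distribution $f(\cdot\mid S_t)$. Algorithm \textsc{NE} with parameter $M>0$: set $W_0(i)=0$ for all $i$, $S_{\mathrm{active}}=[K]$, $t=0$. While $|S_{\mathrm{active}}|>1$: $t\leftarrow t+1$; display $S_{\mathrm{active}}$, observe $X_t$; increase the score of $X_t$ by one ($W_t(X_t)=W_{t-1}(X_t)+1$, other scores unchanged); order active items as $\pi_t(1),\pi_t(2),\dots$ with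 nonincreasing scores $W_t$ (ties arbitrary); find the smallest $k<|S_{\mathrm{active}}|$ with $\sum_{i=1}^kW_t(\pi_t(i))-kW_t(\pi_t(k+1))\ge M$ and, if it exists, set $S_{\mathrm{active}}\leftarrow\{\pi_t(1),\dots,\pi_t(k)\}$. Elimination order: list the $K-1$ items removed by \textsc{NE} as $a_1,a_2,\dots,a_{K-1}$ in order of removal, where items removed at the same time step $t$ are listed from the last position of $\pi_t$ upward (i.e., the item in the lowest position first). Equivalently, the run is divided into stages $r=1,\dots,K-1$, stage $r$ being the period in which exactly $K-r+1$ items are active in this one-at-a-time description, and $a_r$ is the item removed at the end of stage $r$. For $r\in[K]$ let $\mathcal E_r=\{a_j=K-j+1\text{ for all }j\in[r-1]\}$ (so $\mathcal E_1$ is the sure event). *)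

theory Defs
  imports "HOL-Probability.Probability"
begin

text \<open>Items are 1..K.  A preference is f :: nat => nat set => real, with f i S = f(i|S).\<close>

definition display_sets :: "nat \<Rightarrow> nat set set" where
  "display_sets K = {S. S \<subseteq> {1..K} \<and> card S \<ge> 2}"

definition sep_ranking :: "nat \<Rightarrow> real \<Rightarrow> (nat \<Rightarrow> nat set \<Rightarrow> real) \<Rightarrow> (nat \<Rightarrow> nat) \<Rightarrow> bool" where
  "sep_ranking K p f \<sigma> \<longleftrightarrow> bij_betw \<sigma> {1..K} {1..K} \<and>
     (\<forall>S\<in>display_sets K. \<forall>i\<in>S. \<forall>i'\<in>S. \<sigma> i' < \<sigma> i \<longrightarrow> f i S \<le> p * f i' S)"

definition Mp :: "nat \<Rightarrow> real \<Rightarrow> (nat \<Rightarrow> nat set \<Rightarrow> real) \<Rightarrow> bool" where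
  "Mp K p f \<longleftrightarrow>
     (\<forall>S\<in>display_sets K. \<forall>i\<in>{1..K}. f i S > 0 \<longleftrightarrow> i \<in> S) \<and>
     (\<forall>S\<in>display_sets K. (\<Sum>i\<in>S. f i S) = 1) \<and>
     (\<exists>\<sigma>. sep_ranking K p f \<sigma>)"

definition choice_pmf :: "(nat \<Rightarrow> nat set \<Rightarrow> real) \<Rightarrow> nat set \<Rightarrow> nat pmf" where
  "choice_pmf f S = embed_pmf (\<lambda>i. if i \<in> S then f i S else 0)"

text \<open>Admissible tie-breaking rules: given the history of observed choices, the current
  scores W and the active set A, return an ordering of A with nonincreasing scores.\<close>
definition valid_tiebreak :: "(nat list \<Rightarrow> (nat \<Rightarrow> nat) \<Rightarrow> nat set \<Rightarrow> nat list) \<Rightarrow> bool" where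
  "valid_tiebreak tb \<longleftrightarrow> (\<forall>h W A. finite A \<longrightarrow>
     set (tb h W A) = A \<and> distinct (tb h W A) \<and> sorted_wrt (\<lambda>i j. W i \<ge> W j) (tb h W A))"

text \<open>Elimination test: smallest k < length pi with
  sum_{i=1..k} W(pi(i)) - k W(pi(k+1)) >= M (0-based list indices).\<close>
definition cut_cond :: "nat \<Rightarrow> (nat \<Rightarrow> nat) \<Rightarrow> nat list \<Rightarrow> nat \<Rightarrow> bool" where
  "cut_cond M W \<pi> k \<longleftrightarrow> 0 < k \<and> k < length \<pi> \<and>
     (\<Sum>i<k. real (W (\<pi> ! i))) - real k * real (W (\<pi> ! k)) \<ge> real M"

text \<open>State: (history of choices, scores W, active set, elimination list a_1, a_2, ...).\<close>
type_synonym ne_state = "nat list \<times> (nat \<Rightarrow> nat) \<times> nat set \<times> nat list"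

definition ne_update :: "nat \<Rightarrow> (nat list \<Rightarrow> (nat \<Rightarrow> nat) \<Rightarrow> nat set \<Rightarrow> nat list)
     \<Rightarrow> ne_state \<Rightarrow> nat \<Rightarrow> ne_state" where
  "ne_update M tb s x = (case s of (h, W, A, el) \<Rightarrow>
     (let h' = h @ [x]; W' = W(x := Suc (W x)); \<pi> = tb h' W' A in
      if \<exists>k. cut_cond M W' \<pi> k then
        (let k = (LEAST k. cut_cond M W' \<pi> k) in
          (h', W', set (take k \<pi>), el @ rev (drop k \<pi>)))
      else (h', W', A, el)))"

definition ne_step :: "(nat \<Rightarrow> nat set \<Rightarrow> real) \<Rightarrow> nat \<Rightarrow>
     (nat list \<Rightarrow> (nat \<Rightarrow> nat) \<Rightarrow> nat set \<Rightarrow> nat list) \<Rightarrow> ne_state \<Rightarrow> ne_state pmf" where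
  "ne_step f M tb s = (case s of (h, W, A, el) \<Rightarrow>
     if card A \<le> 1 then return_pmf s
     else map_pmf (ne_update M tb s) (choice_pmf f A))"

fun ne_run :: "nat \<Rightarrow> (nat \<Rightarrow> nat set \<Rightarrow> real) \<Rightarrow> nat \<Rightarrow>
     (nat list \<Rightarrow> (nat \<Rightarrow> nat) \<Rightarrow> nat set \<Rightarrow> nat list) \<Rightarrow> nat \<Rightarrow> ne_state pmf" where
  "ne_run K f M tb 0 = return_pmf ([], (\<lambda>_. 0), {1..K}, [])"
| "ne_run K f M tb (Suc T) = bind_pmf (ne_run K f M tb T) (ne_step f M tb)"

text \<open>The event E_{r-1} minus E_r, in terms of the elimination list el = [a_1, a_2, ...]:
  a_j = K-j+1 for j \<le> r-2 and a_{r-1} \<noteq> K-r+2 (a_{r-1} having occurred).\<close>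
definition bad_event :: "nat \<Rightarrow> nat \<Rightarrow> nat list \<Rightarrow> bool" where
  "bad_event K r el \<longleftrightarrow> r - 1 \<le> length el \<and>
     (\<forall>j\<in>{1..r-2}. el ! (j - 1) = K - j + 1) \<and> el ! (r - 2) \<noteq> K - r + 2"

end

theory Submission
  imports Defs
begin

text \<open>Fix items \<open>j < n\<close>, so that \<open>f(n|S) \<le> p f(j|S)\<close>. While both are active, the process
  \<open>x^W(j) x^-W(n) \<rho>^(M-t)\<close> is a supermartingale for suitable \<open>p < x < 1\<close> and \<open>\<rho> < 1\<close>: one round
  multiplies it in expectation by \<open>1 + f(j|S)(x-1) + f(n|S)(1/x-1) \<le> 1 - c(1-x)(1-p/x)\<close>, where
  \<open>c\<close> is the smallest choice probability. If \<open>j\<close> is removed while \<open>n\<close> survives, then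
  \<open>W(j) \<le> W(n)\<close> by the ordering, and \<open>t \<ge> M\<close> since the surviving scores alone sum to at least \<open>M\<close>;
  so the process is then at least 1. Adding the indicator of "\<open>j\<close> removed before \<open>n\<close>" yields a
  nonnegative supermartingale started at \<open>\<rho>^M\<close>, hence that event has probability at most \<open>\<rho>^M\<close>.
  On \<open>E(r-1) - E(r)\<close> some item \<open>a \<le> K-r+1\<close> is removed before \<open>K-r+2\<close>, and a union bound
  over \<open>a\<close> finishes the proof.\<close>

definition precedes :: "'a \<Rightarrow> 'a \<Rightarrow> 'a list \<Rightarrow> bool" where
  "precedes j n xs \<longleftrightarrow> j \<in> set xs \<and> n \<noteq> j \<and> n \<notin> set (takeWhile (\<lambda>y. y \<noteq> j) xs)"

lemma precedes_append_mem:
  assumes "j \<in> set xs \<or> n \<in> set xs"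
  shows "precedes j n (xs @ ys) \<longleftrightarrow> precedes j n xs"
proof (cases "j \<in> set xs")
  case True
  then show ?thesis by (simp add: precedes_def takeWhile_append1)
next
  case False
  then have "takeWhile (\<lambda>y. y \<noteq> j) (xs @ ys) = xs @ takeWhile (\<lambda>y. y \<noteq> j) ys"
    by (auto simp: takeWhile_append)
  then show ?thesis using assms False by (simp add: precedes_def)
qed

lemma precedes_append_not_mem:
  assumes "j \<notin> set xs" "n \<notin> set xs"
  shows "precedes j n (xs @ ys) \<longleftrightarrow> precedes j n ys"
proof -
  have "takeWhile (\<lambda>y. y \<noteq> j) (xs @ ys) = xs @ takeWhile (\<lambda>y. y \<noteq> j) ys"
    using assms(1) by (auto simp: takeWhile_append)
  then show ?thesis using assms by (simp add: precedes_def)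
qed

lemma sorted_wrt_precedes:
  assumes "sorted_wrt R xs" "precedes j n xs" "n \<in> set xs"
  shows "R j n"
proof -
  obtain ys zs where xs: "xs = ys @ j # zs" and "j \<notin> set ys"
    using assms(2) split_list_first unfolding precedes_def by metis
  then have "takeWhile (\<lambda>y. y \<noteq> j) xs = ys"
    by (auto simp: takeWhile_tail takeWhile_eq_all_conv)
  with assms(2,3) have "n \<in> set zs" unfolding precedes_def xs by auto
  with assms(1) show ?thesis unfolding xs by (simp add: sorted_wrt_append)
qed

definition ne_invariant :: "nat \<Rightarrow> ne_state \<Rightarrow> bool" where
  "ne_invariant K s \<longleftrightarrow> (case s of (h, W, A, el) \<Rightarrow>
     A \<inter> set el = {} \<and> A \<union> set el = {1..K} \<and> distinct el \<and>
     (\<forall>B. finite B \<longrightarrow> sum W B \<le> length h))"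

lemma ne_invariantD:
  assumes "ne_invariant K (h, W, A, el)"
  shows "A \<inter> set el = {}" "A \<union> set el = {1..K}" "distinct el"
    and "finite A" and "finite B \<Longrightarrow> sum W B \<le> length h"
proof -
  show "A \<inter> set el = {}" "A \<union> set el = {1..K}" "distinct el"
    and sum_le: "finite B \<Longrightarrow> sum W B \<le> length h"
    using assms unfolding ne_invariant_def by simp_all
  then show "finite A" by (metis finite_Un finite_atLeastAtMost)
qed

lemma sum_fun_upd_Suc:
  assumes "finite B"
  shows "sum (W(x := Suc (W x))) B = sum W B + (if x \<in> B then 1 else 0)"
proof -
  have "W(x := Suc (W x)) = (\<lambda>i. W i + (if i = x then 1 else 0))" by auto
  then show ?thesis using assms by (simp add: sum.distrib)
qed

lemma sum_nth_eq_sum_set_take: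
  assumes "distinct xs" "k \<le> length xs"
  shows "(\<Sum>i<k. g (xs ! i)) = sum g (set (take k xs))"
proof -
  have "set (take k xs) = (!) xs ` {..<k}" using assms(2) by (simp add: nth_image lessThan_atLeast0)
  moreover have "inj_on ((!) xs) {..<k}" using assms by (simp add: inj_on_nth)
  ultimately show ?thesis by (simp add: sum.reindex)
qed

lemma cut_cond_le_sum:
  assumes "cut_cond M W \<pi> k" "distinct \<pi>"
  shows "M \<le> sum W (set (take k \<pi>))"
proof -
  have "0 \<le> real k * real (W (\<pi> ! k))" by simp
  then have "real M \<le> (\<Sum>i<k. real (W (\<pi> ! i)))" using assms(1) unfolding cut_cond_def by linarith
  also have "\<dots> = real (sum W (set (take k \<pi>)))"
    using assms sum_nth_eq_sum_set_take[of \<pi> k "\<lambda>i. real (W i)"] unfolding cut_cond_def by simp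
  finally show ?thesis by linarith
qed

lemma valid_tiebreakD:
  assumes "valid_tiebreak tb" "finite A"
  shows "set (tb h W A) = A" "distinct (tb h W A)" "sorted_wrt (\<lambda>i j. W i \<ge> W j) (tb h W A)"
  using assms unfolding valid_tiebreak_def by blast+

lemma ne_update_cases:
  fixes W :: "nat \<Rightarrow> nat" and x :: nat and tb h A
  defines "W' \<equiv> W(x := Suc (W x))" and "\<pi> \<equiv> tb (h @ [x]) (W(x := Suc (W x))) A"
  obtains (keep) "ne_update M tb (h, W, A, el) x = (h @ [x], W', A, el)"
    | (cut) k where "cut_cond M W' \<pi> k"
      "ne_update M tb (h, W, A, el) x = (h @ [x], W', set (take k \<pi>), el @ rev (drop k \<pi>))"
proof -
  have "ne_update M tb (h, W, A, el) x = (if \<exists>k. cut_cond M W' \<pi> k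
      then (h @ [x], W', set (take (LEAST k. cut_cond M W' \<pi> k) \<pi>),
            el @ rev (drop (LEAST k. cut_cond M W' \<pi> k) \<pi>))
      else (h @ [x], W', A, el))"
    unfolding ne_update_def W'_def \<pi>_def Let_def by simp
  moreover have "cut_cond M W' \<pi> (LEAST k. cut_cond M W' \<pi> k)" if "\<exists>k. cut_cond M W' \<pi> k"
    using that by (rule LeastI_ex)
  ultimately show ?thesis using keep cut by (cases "\<exists>k. cut_cond M W' \<pi> k") auto
qed

lemma ne_invariant_update:
  assumes inv: "ne_invariant K (h, W, A, el)" and tb: "valid_tiebreak tb"
  shows "ne_invariant K (ne_update M tb (h, W, A, el) x)"
proof -
  note I = ne_invariantD[OF inv]
  let ?W' = "W(x := Suc (W x))" and ?\<pi> = "tb (h @ [x]) (W(x := Suc (W x))) A"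
  have \<pi>: "set ?\<pi> = A" "distinct ?\<pi>" using valid_tiebreakD[OF tb I(4)] by blast+
  have sum_le': "sum ?W' B \<le> length (h @ [x])" if "finite B" for B
    using I(5)[OF that] sum_fun_upd_Suc[OF that] by simp
  show ?thesis
  proof (cases rule: ne_update_cases[of M tb h W A el x])
    case keep
    then show ?thesis using I(1-3) sum_le' unfolding ne_invariant_def by simp
  next
    case (cut k)
    have "set (take k ?\<pi>) \<inter> set (drop k ?\<pi>) = {}" "set (take k ?\<pi>) \<union> set (drop k ?\<pi>) = A"
      using \<pi> by (metis distinct_append append_take_drop_id, metis set_append append_take_drop_id)
    moreover have "distinct (drop k ?\<pi>)" using \<pi>(2) by simp
    ultimately show ?thesis using cut(2) I(1-3) sum_le' unfolding ne_invariant_def by auto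
  qed
qed

lemma ne_invariant_run:
  assumes "valid_tiebreak tb" "s \<in> set_pmf (ne_run K f M tb T)"
  shows "ne_invariant K s"
  using assms(2)
proof (induction T arbitrary: s)
  case 0
  then show ?case by (simp add: ne_invariant_def)
next
  case (Suc T)
  then obtain s0 where s0: "s0 \<in> set_pmf (ne_run K f M tb T)" "s \<in> set_pmf (ne_step f M tb s0)"
    by auto
  obtain h W A el where s0_eq: "s0 = (h, W, A, el)" by (cases s0)
  have "ne_invariant K s0" using Suc.IH s0(1) .
  then show ?case
    using s0(2) ne_invariant_update[OF _ assms(1)]
    unfolding s0_eq ne_step_def by (auto split: if_splits)
qed

text \<open>The exponent \<open>M - length h\<close> is truncated: the factor \<open>\<rho>^(M-t)\<close> becomes 1 once \<open>t \<ge> M\<close>.\<close>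
definition score_potential ::
    "real \<Rightarrow> real \<Rightarrow> nat \<Rightarrow> nat \<Rightarrow> nat \<Rightarrow> nat list \<Rightarrow> (nat \<Rightarrow> nat) \<Rightarrow> real" where
  "score_potential x \<rho> M j n h W = x ^ W j * (1 / x) ^ W n * \<rho> ^ (M - length h)"

definition elim_potential ::
    "real \<Rightarrow> real \<Rightarrow> nat \<Rightarrow> nat \<Rightarrow> nat \<Rightarrow> ne_state \<Rightarrow> real" where
  "elim_potential x \<rho> M j n s = (case s of (h, W, A, el) \<Rightarrow>
     (if precedes j n el then 1 else 0) +
     (if j \<in> A \<and> n \<in> A then score_potential x \<rho> M j n h W else 0))"

lemma score_potential_nonneg: "0 < x \<Longrightarrow> 0 \<le> \<rho> \<Longrightarrow> 0 \<le> score_potential x \<rho> M j n h W"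
  unfolding score_potential_def by simp

lemma score_potential_ge_1:
  assumes "0 < x" "x \<le> 1" "W j \<le> W n" "M \<le> length h"
  shows "1 \<le> score_potential x \<rho> M j n h W"
proof -
  have "x ^ W j * (1 / x) ^ W n = (1 / x) ^ (W n - W j)"
    using assms(1,3) by (simp add: power_diff field_simps)
  also have "1 \<le> \<dots>" using assms(1,2) by (simp add: one_le_power)
  finally show ?thesis using assms(4) unfolding score_potential_def by simp
qed

lemma ne_update_cut_precedes:
  fixes tb h W i A
  defines "W' \<equiv> W(i := Suc (W i))" and "\<pi> \<equiv> tb (h @ [i]) (W(i := Suc (W i))) A"
  assumes inv: "ne_invariant K (h, W, A, el)" and tb: "valid_tiebreak tb"
    and jn: "j \<in> A" "n \<in> A" and cut: "cut_cond M W' \<pi> k"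
    and prec: "precedes j n (el @ rev (drop k \<pi>))"
  shows "W' j \<le> W' n" "M \<le> length (h @ [i])" "j \<notin> set (take k \<pi>)"
proof -
  note I = ne_invariantD[OF inv]
  have \<pi>: "set \<pi> = A" "distinct \<pi>" "sorted_wrt (\<lambda>u v. W' u \<ge> W' v) \<pi>"
    unfolding \<pi>_def W'_def by (rule valid_tiebreakD[OF tb I(4)])+
  have "j \<notin> set el" "n \<notin> set el" using jn I(1) by blast+
  with prec have prec_drop: "precedes j n (rev (drop k \<pi>))"
    by (simp add: precedes_append_not_mem)
  then have j_drop: "j \<in> set (drop k \<pi>)" unfolding precedes_def by simp
  have "rev \<pi> = rev (drop k \<pi>) @ rev (take k \<pi>)"
    by (metis append_take_drop_id rev_append)
  then have prec_rev: "precedes j n (rev \<pi>)"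
    using prec_drop precedes_append_mem[of j "rev (drop k \<pi>)" n] j_drop by simp
  have sorted_rev: "sorted_wrt (\<lambda>u v. W' u \<le> W' v) (rev \<pi>)"
    using \<pi>(3) by (simp add: sorted_wrt_rev)
  have "n \<in> set (rev \<pi>)" using jn \<pi>(1) by simp
  with sorted_rev prec_rev show "W' j \<le> W' n" by (rule sorted_wrt_precedes)
  have "sum W' (set (take k \<pi>)) \<le> length (h @ [i])"
    using I(5)[of "set (take k \<pi>)"] sum_fun_upd_Suc[of "set (take k \<pi>)" W i]
    unfolding W'_def by simp
  with cut_cond_le_sum[OF cut \<pi>(2)] show "M \<le> length (h @ [i])" by linarith
  show "j \<notin> set (take k \<pi>)"
    using j_drop set_take_disj_set_drop_if_distinct[OF \<pi>(2), of k k] by blast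
qed

lemma elim_potential_update_active:
  assumes inv: "ne_invariant K (h, W, A, el)" and tb: "valid_tiebreak tb"
    and jn: "j \<in> A" "n \<in> A" and x: "0 < x" "x \<le> 1" and \<rho>: "0 \<le> \<rho>"
  shows "elim_potential x \<rho> M j n (ne_update M tb (h, W, A, el) i)
    \<le> score_potential x \<rho> M j n (h @ [i]) (W(i := Suc (W i)))"
proof (cases rule: ne_update_cases[of M tb h W A el i])
  case keep
  have "j \<notin> set el" using jn ne_invariantD(1)[OF inv] by blast
  then show ?thesis unfolding keep elim_potential_def using jn by (simp add: precedes_def)
next
  case (cut k)
  let ?\<pi> = "tb (h @ [i]) (W(i := Suc (W i))) A"
  show ?thesis
  proof (cases "precedes j n (el @ rev (drop k ?\<pi>))")
    case False
    then show ?thesis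
      unfolding cut(2) elim_potential_def using score_potential_nonneg x \<rho> by simp
  next
    case True
    note removed = ne_update_cut_precedes[OF inv tb jn cut(1) True]
    then have "1 \<le> score_potential x \<rho> M j n (h @ [i]) (W(i := Suc (W i)))"
      using score_potential_ge_1 x by blast
    moreover have "\<not> (j \<in> set (take k ?\<pi>) \<and> n \<in> set (take k ?\<pi>))" 
      using removed(3) by (rule contrapos_nn) (rule conjunct1)
    ultimately show ?thesis unfolding cut(2) elim_potential_def
      by (simp only: prod.case if_P[OF True] if_False add_0_right)
  qed
qed

lemma elim_potential_update_inactive:
  assumes inv: "ne_invariant K (h, W, A, el)" and tb: "valid_tiebreak tb"
    and inactive: "\<not> (j \<in> A \<and> n \<in> A)" and jn: "j \<in> {1..K}" "n \<in> {1..K}"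
  shows "elim_potential x \<rho> M j n (ne_update M tb (h, W, A, el) i)
    \<le> elim_potential x \<rho> M j n (h, W, A, el)"
proof -
  note I = ne_invariantD[OF inv]
  have el: "j \<in> set el \<or> n \<in> set el" using I(2) inactive jn by blast
  show ?thesis
  proof (cases rule: ne_update_cases[of M tb h W A el i])
    case keep
    show ?thesis
      unfolding keep elim_potential_def by (simp only: prod.case if_not_P[OF inactive] order_refl)
  next
    case (cut k)
    have "set (take k (tb (h @ [i]) (W(i := Suc (W i))) A)) \<subseteq> A"
      using valid_tiebreakD(1)[OF tb I(4)] by (metis set_take_subset)
    then have inactive': "\<not> (j \<in> set (take k (tb (h @ [i]) (W(i := Suc (W i))) A)) \<and>
        n \<in> set (take k (tb (h @ [i]) (W(i := Suc (W i))) A)))"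
      using inactive by blast
    show ?thesis unfolding cut(2) elim_potential_def
      by (simp only: prod.case if_not_P[OF inactive] if_not_P[OF inactive']
          precedes_append_mem[OF el] order_refl)
  qed
qed

lemma pmf_choice_pmf:
  assumes "finite A" "\<And>i. i \<in> A \<Longrightarrow> 0 \<le> f i A" "(\<Sum>i\<in>A. f i A) = 1"
  shows "pmf (choice_pmf f A) i = (if i \<in> A then f i A else 0)"
proof -
  let ?g = "\<lambda>i. if i \<in> A then f i A else 0"
  have nonneg: "0 \<le> ?g i" for i using assms(2) by simp
  have "(\<integral>\<^sup>+i. ennreal (?g i) \<partial>count_space UNIV) = (\<Sum>i\<in>A. ennreal (?g i))"
    using assms(1) by (subst nn_integral_count_space') auto
  also have "\<dots> = 1" using assms(2,3) by (subst sum_ennreal) auto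
  finally show ?thesis unfolding choice_pmf_def using nonneg by (simp add: pmf_embed_pmf)
qed

lemma nn_integral_pmf_tilt:
  fixes P :: "'a pmf" and W :: "'a \<Rightarrow> nat" and x :: real
  assumes "finite (set_pmf P)" "j \<noteq> n" "0 < x"
  shows "(\<integral>\<^sup>+i. ennreal (x ^ (W(i := Suc (W i))) j * (1 / x) ^ (W(i := Suc (W i))) n) \<partial>P)
    = ennreal (x ^ W j * (1 / x) ^ W n * (1 + pmf P j * (x - 1) + pmf P n * (1 / x - 1)))"
proof -
  let ?C = "x ^ W j * (1 / x) ^ W n"
  let ?g = "\<lambda>i. x ^ (W(i := Suc (W i))) j * (1 / x) ^ (W(i := Suc (W i))) n"
  have g_nonneg: "0 \<le> ?g i" for i using assms(3) by simp
  have pmf_if: "(if i \<in> set_pmf P then c * pmf P i else 0) = c * pmf P i" for i c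
    by (simp add: set_pmf_iff)
  have "?g i * pmf P i = ?C * pmf P i + (if i = j then ?C * (x - 1) * pmf P i else 0)
      + (if i = n then ?C * (1 / x - 1) * pmf P i else 0)" for i
    using assms(2,3) by (auto simp: algebra_simps)
  then have "(\<Sum>i\<in>set_pmf P. ?g i * pmf P i)
      = ?C * (\<Sum>i\<in>set_pmf P. pmf P i) + ?C * (x - 1) * pmf P j + ?C * (1 / x - 1) * pmf P n"
    using assms(1) by (simp add: sum.distrib sum_distrib_left sum.delta pmf_if)
  also have "\<dots> = ?C * (1 + pmf P j * (x - 1) + pmf P n * (1 / x - 1))"
    using assms(1) by (simp add: sum_pmf_eq_1 algebra_simps)
  finally have sum_eq: "(\<Sum>i\<in>set_pmf P. ?g i * pmf P i) = ?C * (1 + pmf P j * (x - 1) + pmf P n * (1 / x - 1))" .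
  have "(\<integral>\<^sup>+i. ennreal (?g i) \<partial>P) = (\<Sum>i\<in>set_pmf P. ennreal (?g i) * ennreal (pmf P i))"
    using assms(1) by (rule nn_integral_measure_pmf_finite) simp
  also have "\<dots> = (\<Sum>i\<in>set_pmf P. ennreal (?g i * pmf P i))"
    by (intro sum.cong refl) (rule ennreal_mult[OF g_nonneg pmf_nonneg, symmetric])
  also have "\<dots> = ennreal (\<Sum>i\<in>set_pmf P. ?g i * pmf P i)"
    by (rule sum_ennreal) (intro mult_nonneg_nonneg g_nonneg pmf_nonneg)
  finally show ?thesis unfolding sum_eq .
qed

context
  fixes K M :: nat and f :: "nat \<Rightarrow> nat set \<Rightarrow> real" and tb and x \<rho> :: real and j n :: nat
  assumes tb: "valid_tiebreak tb"
    and f_nonneg: "\<And>S i. S \<in> display_sets K \<Longrightarrow> i \<in> S \<Longrightarrow> 0 \<le> f i S"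
    and f_sum: "\<And>S. S \<in> display_sets K \<Longrightarrow> (\<Sum>i\<in>S. f i S) = 1"
    and jn: "j \<in> {1..K}" "n \<in> {1..K}" "j \<noteq> n"
    and x: "0 < x" "x \<le> 1" and \<rho>: "0 \<le> \<rho>" "\<rho> \<le> 1"
    and drift: "\<And>S. S \<in> display_sets K \<Longrightarrow> j \<in> S \<Longrightarrow> n \<in> S \<Longrightarrow>
      1 + f j S * (x - 1) + f n S * (1 / x - 1) \<le> \<rho>"
begin

lemma nn_integral_score_potential_step_le:
  assumes A: "A \<in> display_sets K" and jn_A: "j \<in> A" "n \<in> A"
  shows "(\<integral>\<^sup>+i. ennreal (score_potential x \<rho> M j n (h @ [i]) (W(i := Suc (W i)))) \<partial>choice_pmf f A)
    \<le> ennreal (score_potential x \<rho> M j n h W)"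
proof -
  let ?P = "choice_pmf f A" and ?R = "\<rho> ^ (M - Suc (length h))" and ?C = "x ^ W j * (1 / x) ^ W n"
  have "finite A" using A finite_subset unfolding display_sets_def by blast
  then have pmf_P: "pmf ?P i = (if i \<in> A then f i A else 0)" for i
    using pmf_choice_pmf f_nonneg[OF A] f_sum[OF A] by blast
  have "set_pmf ?P \<subseteq> A" by (auto simp: set_pmf_iff pmf_P split: if_splits)
  with \<open>finite A\<close> have fin_P: "finite (set_pmf ?P)" by (rule finite_subset[rotated])
  have "(\<integral>\<^sup>+i. ennreal (score_potential x \<rho> M j n (h @ [i]) (W(i := Suc (W i)))) \<partial>?P)
      = (\<integral>\<^sup>+i. ennreal ?R * ennreal (x ^ (W(i := Suc (W i))) j * (1 / x) ^ (W(i := Suc (W i))) n) \<partial>?P)"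
    using x \<rho> by (simp add: score_potential_def ennreal_mult' mult.commute)
  also have "\<dots> = ennreal ?R * ennreal (?C * (1 + f j A * (x - 1) + f n A * (1 / x - 1)))"
    using nn_integral_pmf_tilt[OF fin_P jn(3) x(1), of W] jn_A
    by (simp add: nn_integral_cmult pmf_P)
  also have "\<dots> \<le> ennreal (score_potential x \<rho> M j n h W)"
  proof -
    have "?R * (?C * (1 + f j A * (x - 1) + f n A * (1 / x - 1))) \<le> ?R * (?C * \<rho>)"
      using drift[OF A jn_A] x \<rho> by (intro mult_left_mono) auto
    also have "\<dots> = ?C * \<rho> ^ Suc (M - Suc (length h))" by (simp add: algebra_simps)
    also have "\<dots> \<le> ?C * \<rho> ^ (M - length h)"
      using x \<rho> by (intro mult_left_mono power_decreasing) auto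
    finally show ?thesis
      using \<rho> by (simp add: score_potential_def ennreal_mult'[symmetric] ennreal_leI)
  qed
  finally show ?thesis .
qed

lemma nn_integral_ne_step_elim_potential_le:
  assumes inv: "ne_invariant K (h, W, A, el)"
  shows "(\<integral>\<^sup>+t. ennreal (elim_potential x \<rho> M j n t) \<partial>ne_step f M tb (h, W, A, el))
    \<le> ennreal (elim_potential x \<rho> M j n (h, W, A, el))"
proof (cases "card A \<le> 1")
  case True
  then show ?thesis by (simp add: ne_step_def)
next
  case False
  note I = ne_invariantD[OF inv]
  let ?P = "choice_pmf f A"
  have step: "(\<integral>\<^sup>+t. ennreal (elim_potential x \<rho> M j n t) \<partial>ne_step f M tb (h, W, A, el))
      = (\<integral>\<^sup>+i. ennreal (elim_potential x \<rho> M j n (ne_update M tb (h, W, A, el) i)) \<partial>?P)"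
    using False by (simp add: ne_step_def)
  show ?thesis
  proof (cases "j \<in> A \<and> n \<in> A")
    case True
    have A: "A \<in> display_sets K" unfolding display_sets_def using False I(2) by auto
    have "(\<integral>\<^sup>+i. ennreal (elim_potential x \<rho> M j n (ne_update M tb (h, W, A, el) i)) \<partial>?P)
        \<le> (\<integral>\<^sup>+i. ennreal (score_potential x \<rho> M j n (h @ [i]) (W(i := Suc (W i)))) \<partial>?P)"
      using elim_potential_update_active[OF inv tb _ _ x \<rho>(1)] True
      by (intro nn_integral_mono ennreal_leI) blast
    also have "\<dots> \<le> ennreal (score_potential x \<rho> M j n h W)"
      using nn_integral_score_potential_step_le[OF A] True by blast
    also have "\<dots> = ennreal (elim_potential x \<rho> M j n (h, W, A, el))"
      using True I(1) by (auto simp: elim_potential_def precedes_def)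
    finally show ?thesis unfolding step .
  next
    case False
    have "(\<integral>\<^sup>+i. ennreal (elim_potential x \<rho> M j n (ne_update M tb (h, W, A, el) i)) \<partial>?P)
        \<le> (\<integral>\<^sup>+i. ennreal (elim_potential x \<rho> M j n (h, W, A, el)) \<partial>?P)"
      using elim_potential_update_inactive[OF inv tb False jn(1,2)]
      by (intro nn_integral_mono ennreal_leI)
    then show ?thesis unfolding step by (simp add: measure_pmf.emeasure_space_1)
  qed
qed

lemma nn_integral_ne_run_elim_potential_le:
  "(\<integral>\<^sup>+t. ennreal (elim_potential x \<rho> M j n t) \<partial>ne_run K f M tb T) \<le> ennreal (\<rho> ^ M)"
proof (induction T)
  case 0
  then show ?case using jn by (simp add: elim_potential_def score_potential_def precedes_def)
next
  case (Suc T)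
  have "(\<integral>\<^sup>+t. ennreal (elim_potential x \<rho> M j n t) \<partial>ne_run K f M tb (Suc T))
      = (\<integral>\<^sup>+s. (\<integral>\<^sup>+t. ennreal (elim_potential x \<rho> M j n t) \<partial>ne_step f M tb s) \<partial>ne_run K f M tb T)"
    by simp
  also have "\<dots> \<le> (\<integral>\<^sup>+s. ennreal (elim_potential x \<rho> M j n s) \<partial>ne_run K f M tb T)"
  proof (intro nn_integral_mono_AE AE_pmfI)
    fix s assume "s \<in> set_pmf (ne_run K f M tb T)"
    then have "ne_invariant K s" by (rule ne_invariant_run[OF tb])
    then show "(\<integral>\<^sup>+t. ennreal (elim_potential x \<rho> M j n t) \<partial>ne_step f M tb s)
        \<le> ennreal (elim_potential x \<rho> M j n s)"
      using nn_integral_ne_step_elim_potential_le by (cases s) auto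
  qed
  also have "\<dots> \<le> ennreal (\<rho> ^ M)" by (rule Suc.IH)
  finally show ?case .
qed

lemma prob_precedes_le:
  "measure_pmf.prob (ne_run K f M tb T) {s. precedes j n (snd (snd (snd s)))} \<le> \<rho> ^ M"
proof -
  let ?P = "ne_run K f M tb T" and ?E = "{s. precedes j n (snd (snd (snd s)))}"
  have ind_le: "indicator ?E t \<le> elim_potential x \<rho> M j n t" for t
    using score_potential_nonneg[OF x(1) \<rho>(1)]
    by (cases t) (auto simp: elim_potential_def split: split_indicator)
  have "emeasure ?P ?E = (\<integral>\<^sup>+t. indicator ?E t \<partial>?P)" by simp
  also have "\<dots> \<le> (\<integral>\<^sup>+t. ennreal (elim_potential x \<rho> M j n t) \<partial>?P)"
    by (intro nn_integral_mono) (metis ennreal_indicator ennreal_leI ind_le)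
  also have "\<dots> \<le> ennreal (\<rho> ^ M)" by (rule nn_integral_ne_run_elim_potential_le)
  finally show ?thesis using \<rho> by (simp add: measure_pmf.emeasure_eq_measure)
qed

end

lemma takeWhile_neq_nth:
  assumes "distinct xs" "m < length xs"
  shows "takeWhile (\<lambda>y. y \<noteq> xs ! m) xs = take m xs"
proof -
  have xs: "xs = take m xs @ xs ! m # drop (Suc m) xs" using assms(2) by (rule id_take_nth_drop)
  have "xs ! m \<notin> set (take m xs)"
    using assms by (auto simp: in_set_conv_nth nth_eq_iff_index_eq)
  then have "takeWhile (\<lambda>y. y \<noteq> xs ! m) (take m xs) = take m xs"
    by (auto simp: takeWhile_eq_all_conv)
  then show ?thesis by (subst xs) (simp add: takeWhile_tail)
qed

lemma bad_event_imp_precedes: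
  assumes r: "r \<in> {2..K-1}" and el: "distinct el" "set el \<subseteq> {1..K}" and bad: "bad_event K r el"
  shows "\<exists>a\<in>{1..K-r+1}. precedes a (K-r+2) el"
proof -
  define m where "m = r - 2"
  define n where "n = K - r + 2"
  have mK: "m + 3 \<le> K" "n = K - m" using r unfolding m_def n_def by auto
  have m_len: "m < length el" using bad r unfolding bad_event_def m_def by auto
  have prefix: "el ! i = K - i" if "i < m" for i
    using bad that mK unfolding bad_event_def m_def by (auto dest!: bspec[of _ _ "Suc i"])
  define a where "a = el ! m"
  have "a \<noteq> n" using bad unfolding bad_event_def a_def m_def n_def by simp
  have "a \<in> {1..K}" using el(2) nth_mem[OF m_len] unfolding a_def by blast
  moreover have "\<not> n < a"
  proof
    assume "n < a"
    then have "K - a < m" "el ! (K - a) = a" using \<open>a \<in> {1..K}\<close> mK prefix by auto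
    then show False using el(1) m_len unfolding a_def by (simp add: nth_eq_iff_index_eq)
  qed
  ultimately have a_range: "a \<in> {1..K-r+1}" using \<open>a \<noteq> n\<close> unfolding n_def by auto
  have "n \<notin> set (take m el)"
    using prefix mK by (auto simp: in_set_conv_nth)
  then have "precedes a n el"
    using \<open>a \<noteq> n\<close> m_len takeWhile_neq_nth[OF el(1) m_len] unfolding precedes_def a_def by auto
  then show ?thesis using a_range unfolding n_def by blast
qed

lemma prob_bad_event_le:
  assumes tb: "valid_tiebreak tb" and r: "r \<in> {2..K-1}"
    and pair_bound: "\<And>a. a \<in> {1..K-r+1} \<Longrightarrow>
      measure_pmf.prob (ne_run K f M tb T) {s. precedes a (K-r+2) (snd (snd (snd s)))} \<le> b"
  shows "measure_pmf.prob (ne_run K f M tb T) {s. bad_event K r (snd (snd (snd s)))}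
    \<le> real (K - r + 1) * b"
proof -
  let ?P = "ne_run K f M tb T"
  let ?E = "\<lambda>a. {s. precedes a (K-r+2) (snd (snd (snd s)))}"
  have "{s. bad_event K r (snd (snd (snd s)))} \<inter> set_pmf ?P \<subseteq> (\<Union>a\<in>{1..K-r+1}. ?E a)"
  proof
    fix s assume s: "s \<in> {s. bad_event K r (snd (snd (snd s)))} \<inter> set_pmf ?P"
    obtain h W A el where s_eq: "s = (h, W, A, el)" by (cases s)
    have "ne_invariant K s" using s ne_invariant_run[OF tb] by blast
    then have "distinct el" "set el \<subseteq> {1..K}" using ne_invariantD(2,3) unfolding s_eq by blast+
    with s r show "s \<in> (\<Union>a\<in>{1..K-r+1}. ?E a)"
      using bad_event_imp_precedes unfolding s_eq by fastforce
  qed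
  then have "measure_pmf.prob ?P {s. bad_event K r (snd (snd (snd s)))}
      \<le> measure_pmf.prob ?P (\<Union>a\<in>{1..K-r+1}. ?E a)"
    by (subst measure_Int_set_pmf[symmetric]) (rule measure_pmf.finite_measure_mono, auto)
  also have "\<dots> \<le> (\<Sum>a\<in>{1..K-r+1}. measure_pmf.prob ?P (?E a))"
    by (rule measure_pmf.finite_measure_subadditive_finite) auto
  also have "\<dots> \<le> (\<Sum>a\<in>{1..K-r+1}. b)" using pair_bound by (rule sum_mono)
  finally show ?thesis by simp
qed

lemma separable_drift_le:
  fixes a b c p x :: real
  assumes "0 < p" "p < x" "x < 1" "c \<le> a" "b \<le> p * a"
  shows "1 + a * (x - 1) + b * (1 / x - 1) \<le> 1 - c * ((1 - x) * (1 - p / x))"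
proof -
  have "0 \<le> (1 - x) * (1 - p / x)" using assms(1-3) by simp
  have "1 + a * (x - 1) + b * (1 / x - 1) \<le> 1 + a * (x - 1) + p * a * (1 / x - 1)"
    using assms by (simp add: mult_right_mono)
  also have "\<dots> = 1 - a * ((1 - x) * (1 - p / x))"
    using assms by (simp add: field_simps)
  also have "\<dots> \<le> 1 - c * ((1 - x) * (1 - p / x))"
    using assms(4) \<open>0 \<le> (1 - x) * (1 - p / x)\<close> by (simp add: mult_right_mono)
  finally show ?thesis .
qed

lemma Mp_choice_prob_lower_bound:
  assumes "Mp K p f"
  obtains c where "0 < c" "\<And>S i. S \<in> display_sets K \<Longrightarrow> i \<in> S \<Longrightarrow> c \<le> f i S"
proof
  let ?D = "Sigma (display_sets K) (\<lambda>S. S)"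
  let ?c = "Min (insert 1 ((\<lambda>(S, i). f i S) ` ?D))"
  have "finite (display_sets K)"
    by (rule finite_subset[of _ "Pow {1..K}"]) (auto simp: display_sets_def)
  moreover have "finite S" if "S \<in> display_sets K" for S
    using that finite_subset unfolding display_sets_def by blast
  ultimately have fin: "finite ?D" by (rule finite_SigmaI)
  have "S \<subseteq> {1..K}" if "S \<in> display_sets K" for S using that unfolding display_sets_def by blast
  then have "0 < f i S" if "(S, i) \<in> ?D" for S i using assms that unfolding Mp_def by blast
  then show "0 < ?c" using fin by (auto simp: Min_gr_iff)
  show "?c \<le> f i S" if "S \<in> display_sets K" "i \<in> S" for S i
    using fin that by (intro Min_le) auto
qed

lemma separable_uniform_drift:
  assumes p: "0 < p" "p < 1" and f: "Mp K p f" "sep_ranking K p f id"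
  obtains x \<rho> :: real where "0 < x" "x \<le> 1" "0 < \<rho>" "\<rho> < 1"
    "\<And>S j n. S \<in> display_sets K \<Longrightarrow> j \<in> S \<Longrightarrow> n \<in> S \<Longrightarrow> j < n \<Longrightarrow>
      1 + f j S * (x - 1) + f n S * (1 / x - 1) \<le> \<rho>"
proof -
  obtain c where c: "0 < c" "\<And>S i. S \<in> display_sets K \<Longrightarrow> i \<in> S \<Longrightarrow> c \<le> f i S"
    using Mp_choice_prob_lower_bound[OF f(1)] by blast
  define x where "x = (1 + p) / 2"
  define \<rho> where "\<rho> = max (1 / 2) (1 - c * ((1 - x) * (1 - p / x)))"
  have x: "p < x" "x < 1" unfolding x_def using p by auto
  then have "0 < (1 - x) * (1 - p / x)" using p by simp
  then have \<rho>: "0 < \<rho>" "\<rho> < 1" unfolding \<rho>_def using c(1) by auto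
  have "1 + f j S * (x - 1) + f n S * (1 / x - 1) \<le> \<rho>"
    if "S \<in> display_sets K" "j \<in> S" "n \<in> S" "j < n" for S j n
  proof -
    have "f n S \<le> p * f j S" using f(2) that unfolding sep_ranking_def by auto
    from separable_drift_le[OF p(1) x c(2)[OF that(1,2)] this]
    show ?thesis unfolding \<rho>_def by (rule order_trans) simp
  qed
  then show ?thesis using that[of x \<rho>] x p \<rho> by simp
qed

theorem mainTheorem4:
  fixes K :: nat and p :: real and f :: "nat \<Rightarrow> nat set \<Rightarrow> real"
  assumes "K \<ge> 3" and "0 < p" and "p < 1"
    and "Mp K p f" and "sep_ranking K p f id"
  shows "\<exists>q0::real. 0 < q0 \<and> q0 < 1 \<and>
    (\<forall>M::nat. M > 0 \<longrightarrow> (\<forall>tb. valid_tiebreak tb \<longrightarrow>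
       (\<forall>r\<in>{2..K-1}. \<forall>T.
          measure_pmf.prob (ne_run K f M tb T) {s. bad_event K r (snd (snd (snd s)))}
            \<le> real (K - r + 1) * q0 ^ M)))"
proof -
  obtain x \<rho> :: real where x: "0 < x" "x \<le> 1" and \<rho>: "0 < \<rho>" "\<rho> < 1"
    and drift: "\<And>S j n. S \<in> display_sets K \<Longrightarrow> j \<in> S \<Longrightarrow> n \<in> S \<Longrightarrow> j < n \<Longrightarrow>
      1 + f j S * (x - 1) + f n S * (1 / x - 1) \<le> \<rho>"
    using separable_uniform_drift[OF assms(2-5)] by blast
  have f_nonneg: "\<And>S i. S \<in> display_sets K \<Longrightarrow> i \<in> S \<Longrightarrow> 0 \<le> f i S"
    and f_sum: "\<And>S. S \<in> display_sets K \<Longrightarrow> (\<Sum>i\<in>S. f i S) = 1"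
    using assms(4) unfolding Mp_def display_sets_def by (auto intro: less_imp_le)
  have "measure_pmf.prob (ne_run K f M tb T) {s. bad_event K r (snd (snd (snd s)))}
      \<le> real (K - r + 1) * \<rho> ^ M" if tb: "valid_tiebreak tb" and r: "r \<in> {2..K-1}" for M tb r T
  proof (rule prob_bad_event_le[OF tb r])
    fix a assume "a \<in> {1..K-r+1}"
    then have "a \<in> {1..K}" "K - r + 2 \<in> {1..K}" "a < K - r + 2" using r by auto
    then show "measure_pmf.prob (ne_run K f M tb T) {s. precedes a (K-r+2) (snd (snd (snd s)))}
        \<le> \<rho> ^ M"
      using prob_precedes_le[OF tb f_nonneg f_sum _ _ _ x] drift \<rho> by simp
  qed
  with \<rho> show ?thesis by blast
qed

end
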